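(* Let $f_0,f_2>0$, $\alpha>0$, let $0<\Lambda_1<\Lambda_{in}$, and let $\mathfrak{c}:[\Lambda_1,\Lambda_{in}]\to\mathbb{R}$ be continuous with $192 f_2\Lambda^2-2f_0\mathfrak{c}(\Lambda)\neq 0$ for all $\Lambda$. Define $$G_{\rm eff}(\Lambda)=\frac{3\pi}{192 f_2\Lambda^2-2f_0\,\mathfrak{c}(\Lambda)} .$$ Let $h:[\Lambda_1,\Lambda_{in}]\to\mathbb{R}$ be continuous with $1-\tfrac{4\pi}{3}G_{\rm eff}(\Lambda)h(\Lambda)\neq 0$, and define $G_{{\rm eff},H}(\Lambda)=\dfrac{G_{\rm eff}(\Lambda)}{1-\frac{4\pi}{3}G_{\rm eff}(\Lambda)h(\Lambda)}$. Use the time–energy relation $\Lambda=e^{-\alpha t}$, i.e. $t=-\alpha^{-1}\log\Lambda$, and for a function $\mathcal{M}$ of $t$ write $\mathcal{M}(\Lambda):=\mathcal{M}(t)$ at $t=-\alpha^{-1}\log\Lambda$. (a) (No gravitational memory.) If $\mathcal{M}>0$ is differentiable on the corresponding time interval and satisfies $\dfrac{d\mathcal{M}}{dt}=-\big(G_{\rm eff}(e^{-\alpha t})\,\mathcal{M}(t)\big)^{-2}$, then for every $\Lambda\in[\Lambda_1,\Lambda_{in}]$ $$\mathcal{M}(\Lambda)=\sqrt[3]{\mathcal{M}^3(\Lambda_{in})-\frac{1}{3\alpha\pi^2}\int_\Lambda^{\Lambda_{in}}\frac{(192 f_2x^2-2f_0\mathfrak{c}(x))^2}{x}\,dx}.$$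 (b) (Gravitational memory.) If $\mathcal{M}>0$ is differentiable on the corresponding time interval and satisfies $\dfrac{d\mathcal{M}}{dt}=-\big(G_{{\rm eff},H}(e^{-\alpha t})\,\mathcal{M}(t)\big)^{-2}$, then for every $\Lambda\in[\Lambda_1,\Lambda_{in}]$ $$\mathcal{M}(\Lambda)=\sqrt[3]{\mathcal{M}^3(\Lambda_{in})-\frac{3}{\alpha}\int_\Lambda^{\Lambda_{in}}\frac{\big(1-\frac{4\pi}{3}G_{\rm eff}(x)h(x)\big)^2}{x\,G_{\rm eff}(x)^2}\,dx}.$$
   Context: Physical interpretation: $\mathcal{M}$ is the mass of a primordial black hole evaporating by Hawking radiation during the inflationary epoch ($a(t)=e^{\alpha t}$, energy $\Lambda=1/a(t)$), $\Lambda_{in}$ the energy at which this epoch begins. $G_{\rm eff}$ is the effective gravitational constant of the noncommutative geometry model, with $\mathfrak{c}(\Lambda)=\mathrm{Tr}(MM^\dagger)$ the renormalization-group-running trace of the squared Majorana mass matrix, and $h(\Lambda)$ plays the role of $|H|^2$ for a (nearly constant) Higgs field $H$. $G_{{\rm eff},H}$ is the effective gravitational constant modified by the conformal coupling of gravity to the Higgs field. *)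

theory Defs
  imports "HOL-Analysis.Analysis"
begin

definition Geff :: "real \<Rightarrow> real \<Rightarrow> (real \<Rightarrow> real) \<Rightarrow> real \<Rightarrow> real" where
  "Geff f0 f2 c \<Lambda> = 3 * pi / (192 * f2 * \<Lambda>\<^sup>2 - 2 * f0 * c \<Lambda>)"

definition GeffH :: "real \<Rightarrow> real \<Rightarrow> (real \<Rightarrow> real) \<Rightarrow> (real \<Rightarrow> real) \<Rightarrow> real \<Rightarrow> real" where
  "GeffH f0 f2 c h \<Lambda> = Geff f0 f2 c \<Lambda> / (1 - 4 * pi / 3 * Geff f0 f2 c \<Lambda> * h \<Lambda>)"

definition time_of :: "real \<Rightarrow> real \<Rightarrow> real" where
  "time_of \<alpha> \<Lambda> = - ln \<Lambda> / \<alpha>"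

end

theory Submission imports Defs begin

(* Along a solution of M' = -(G(exp(-\<alpha>t)) M)^-2 one has (M^3)' = -3 / G(exp(-\<alpha>t))^2.
   In the energy variable \<Lambda> = exp(-\<alpha>t), where dt = -d\<Lambda> / (\<alpha>\<Lambda>), this says that
   M^3 + 3/\<alpha> \<integral> dx / (x G(x)^2) over [\<Lambda>, \<Lambda>in] is constant in time. Both parts of the
   theorem are this conservation law for G = Geff resp. G = GeffH, with the integrand simplified. *)

lemma exp_neg_time_of:
  assumes "\<alpha> \<noteq> 0" and "x > 0"
  shows "exp (- \<alpha> * time_of \<alpha> x) = x"
  using assms by (simp add: time_of_def)

lemma time_of_mem_Icc:
  assumes "\<alpha> > 0" and "0 < a" and "x \<in> {a..b}"
  shows "time_of \<alpha> x \<in> {time_of \<alpha> b..time_of \<alpha> a}"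
  using assms by (auto simp: time_of_def divide_right_mono)

lemma exp_neg_mem_Icc:
  assumes \<alpha>: "\<alpha> > 0" and a: "0 < a" and ab: "a \<le> b"
    and t: "t \<in> {time_of \<alpha> b..time_of \<alpha> a}"
  shows "exp (- \<alpha> * t) \<in> {a..b}"
proof -
  have "ln a \<le> - \<alpha> * t" "- \<alpha> * t \<le> ln b"
    using t \<alpha> by (auto simp: time_of_def field_simps)
  then have "exp (ln a) \<le> exp (- \<alpha> * t)" "exp (- \<alpha> * t) \<le> exp (ln b)"
    by auto
  then show ?thesis
    using a ab by simp
qed

lemma cube_eq_integral_of_ode:
  fixes G M :: "real \<Rightarrow> real"
  assumes \<alpha>: "\<alpha> > 0" and a: "0 < a"
    and G_cont: "continuous_on {a..b} G" and G_nz: "\<forall>x\<in>{a..b}. G x \<noteq> 0"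
    and ode: "\<forall>t\<in>{time_of \<alpha> b..time_of \<alpha> a}. M t > 0 \<and>
       (M has_real_derivative (- inverse ((G (exp (- \<alpha> * t)) * M t)\<^sup>2)))
         (at t within {time_of \<alpha> b..time_of \<alpha> a})"
    and L: "L \<in> {a..b}"
  shows "(M (time_of \<alpha> L))^3
           = (M (time_of \<alpha> b))^3 - 3 / \<alpha> * integral {L..b} (\<lambda>x. inverse (x * (G x)\<^sup>2))"
proof -
  have ab: "a \<le> b"
    using L by simp
  define T where "T = {time_of \<alpha> b..time_of \<alpha> a}"
  define g where "g t = exp (- \<alpha> * t)" for t
  define f where "f = (\<lambda>x. inverse (x * (G x)\<^sup>2))"
  define I where "I u = integral {u..b} f" for u
  define H where "H t = (M t)^3 + 3 / \<alpha> * I (g t)" for t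
  have f_cont: "continuous_on {a..b} f"
    unfolding f_def using a G_nz by (intro continuous_intros G_cont) auto
  have "(H has_field_derivative 0) (at t within T)" if t: "t \<in> T" for t
  proof -
    have gt: "g t \<in> {a..b}"
      using exp_neg_mem_Icc[OF \<alpha> a ab] t by (simp add: T_def g_def)
    have dM: "(M has_real_derivative (- inverse ((G (g t) * M t)\<^sup>2))) (at t within T)"
      using ode t by (simp add: T_def g_def)
    have dg: "(g has_field_derivative (- \<alpha> * g t)) (at t within T)"
      unfolding g_def by (auto intro!: derivative_eq_intros)
    have "(I has_field_derivative - f (g t)) (at (g t) within {a..b})"
      unfolding I_def by (rule integral_has_real_derivative'[OF f_cont gt])
    then have "(I has_field_derivative - f (g t)) (at (g t) within g ` T)"
      by (rule DERIV_subset) (use exp_neg_mem_Icc[OF \<alpha> a ab] in \<open>auto simp: T_def g_def\<close>)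
    from DERIV_image_chain[OF this dg]
    have "(H has_field_derivative
            3 * (M t)\<^sup>2 * - inverse ((G (g t) * M t)\<^sup>2) + 3 / \<alpha> * (- f (g t) * (- \<alpha> * g t)))
          (at t within T)"
      unfolding H_def using dM by (auto intro!: derivative_eq_intros simp: o_def)
    moreover have "g t > 0" "M t > 0"
      using ode t by (auto simp: T_def g_def)
    ultimately show ?thesis
      using \<alpha> by (simp add: f_def field_simps power2_eq_square)
  qed
  then obtain C where "\<forall>t\<in>T. H t = C"
    using has_field_derivative_zero_constant[of T H] by (auto simp: T_def)
  moreover have "time_of \<alpha> L \<in> T" "time_of \<alpha> b \<in> T"
    using time_of_mem_Icc[OF \<alpha> a] L by (auto simp: T_def)
  ultimately have "H (time_of \<alpha> L) = H (time_of \<alpha> b)"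
    by simp
  moreover have "g (time_of \<alpha> x) = x" if "x \<in> {a..b}" for x
    using exp_neg_time_of \<alpha> a that by (simp add: g_def)
  ultimately have "(M (time_of \<alpha> L))^3 + 3 / \<alpha> * integral {L..b} f = (M (time_of \<alpha> b))^3"
    using L by (simp add: H_def I_def)
  then show ?thesis
    unfolding f_def by linarith
qed

lemma inverse_mult_Geff_sq:
  "inverse (x * (Geff f0 f2 c x)\<^sup>2) = 1 / (9 * pi\<^sup>2) * ((192 * f2 * x\<^sup>2 - 2 * f0 * c x)\<^sup>2 / x)"
  by (simp add: Geff_def field_simps power2_eq_square)

lemma inverse_mult_GeffH_sq:
  "inverse (x * (GeffH f0 f2 c h x)\<^sup>2)
     = (1 - 4 * pi / 3 * Geff f0 f2 c x * h x)\<^sup>2 / (x * (Geff f0 f2 c x)\<^sup>2)"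
  by (simp add: GeffH_def power_divide field_simps)

lemma integral_mult_left_real:
  fixes f :: "real \<Rightarrow> real"
  shows "integral S (\<lambda>x. k * f x) = k * integral S f"
  using integral_cmul[of S k f] by simp

theorem proposition4p9:
  fixes f0 f2 \<alpha> \<Lambda>1 \<Lambda>in :: real and c h :: "real \<Rightarrow> real"
  assumes f0: "f0 > 0" and f2: "f2 > 0" and \<alpha>: "\<alpha> > 0"
    and L1: "0 < \<Lambda>1" and L1in: "\<Lambda>1 < \<Lambda>in"
    and c_cont: "continuous_on {\<Lambda>1..\<Lambda>in} c"
    and c_nz: "\<forall>\<Lambda>\<in>{\<Lambda>1..\<Lambda>in}. 192 * f2 * \<Lambda>\<^sup>2 - 2 * f0 * c \<Lambda> \<noteq> 0"
    and h_cont: "continuous_on {\<Lambda>1..\<Lambda>in} h"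
    and h_nz: "\<forall>\<Lambda>\<in>{\<Lambda>1..\<Lambda>in}. 1 - 4 * pi / 3 * Geff f0 f2 c \<Lambda> * h \<Lambda> \<noteq> 0"
  shows
    "(\<forall>M :: real \<Rightarrow> real.
        (\<forall>t\<in>{time_of \<alpha> \<Lambda>in..time_of \<alpha> \<Lambda>1}. M t > 0 \<and>
           (M has_real_derivative (- inverse ((Geff f0 f2 c (exp (- \<alpha> * t)) * M t)\<^sup>2)))
             (at t within {time_of \<alpha> \<Lambda>in..time_of \<alpha> \<Lambda>1}))
        \<longrightarrow> (\<forall>\<Lambda>\<in>{\<Lambda>1..\<Lambda>in}.
              M (time_of \<alpha> \<Lambda>) =
                root 3 ((M (time_of \<alpha> \<Lambda>in)) ^ 3
                  - 1 / (3 * \<alpha> * pi\<^sup>2) *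
                    integral {\<Lambda>..\<Lambda>in} (\<lambda>x. (192 * f2 * x\<^sup>2 - 2 * f0 * c x)\<^sup>2 / x))))
     \<and>
     (\<forall>M :: real \<Rightarrow> real.
        (\<forall>t\<in>{time_of \<alpha> \<Lambda>in..time_of \<alpha> \<Lambda>1}. M t > 0 \<and>
           (M has_real_derivative (- inverse ((GeffH f0 f2 c h (exp (- \<alpha> * t)) * M t)\<^sup>2)))
             (at t within {time_of \<alpha> \<Lambda>in..time_of \<alpha> \<Lambda>1}))
        \<longrightarrow> (\<forall>\<Lambda>\<in>{\<Lambda>1..\<Lambda>in}.
              M (time_of \<alpha> \<Lambda>) =
                root 3 ((M (time_of \<alpha> \<Lambda>in)) ^ 3
                  - 3 / \<alpha> *
                    integral {\<Lambda>..\<Lambda>in}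
                      (\<lambda>x. (1 - 4 * pi / 3 * Geff f0 f2 c x * h x)\<^sup>2 / (x * (Geff f0 f2 c x)\<^sup>2)))))"
proof -
  have Geff_cont: "continuous_on {\<Lambda>1..\<Lambda>in} (Geff f0 f2 c)"
    unfolding Geff_def using c_nz by (intro continuous_intros c_cont) auto
  have Geff_nz: "\<forall>x\<in>{\<Lambda>1..\<Lambda>in}. Geff f0 f2 c x \<noteq> 0"
    using c_nz by (simp add: Geff_def)
  have GeffH_cont: "continuous_on {\<Lambda>1..\<Lambda>in} (GeffH f0 f2 c h)"
    unfolding GeffH_def using h_nz by (intro continuous_intros Geff_cont h_cont) auto
  have GeffH_nz: "\<forall>x\<in>{\<Lambda>1..\<Lambda>in}. GeffH f0 f2 c h x \<noteq> 0"
    using Geff_nz h_nz by (simp add: GeffH_def)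
  show ?thesis
  proof (intro conjI allI impI ballI, goal_cases)
    case (1 M L)
    from cube_eq_integral_of_ode[OF \<alpha> L1 Geff_cont Geff_nz 1]
    have "M (time_of \<alpha> L) ^ 3 = M (time_of \<alpha> \<Lambda>in) ^ 3 - 1 / (3 * \<alpha> * pi\<^sup>2) *
            integral {L..\<Lambda>in} (\<lambda>x. (192 * f2 * x\<^sup>2 - 2 * f0 * c x)\<^sup>2 / x)"
      unfolding inverse_mult_Geff_sq integral_mult_left_real by simp
    then show ?case
      using odd_real_root_power_cancel[of 3 "M (time_of \<alpha> L)"] by simp
  next
    case (2 M L)
    from cube_eq_integral_of_ode[OF \<alpha> L1 GeffH_cont GeffH_nz 2, unfolded inverse_mult_GeffH_sq]
    show ?case
      using odd_real_root_power_cancel[of 3 "M (time_of \<alpha> L)"] by simp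
  qed
qed

end
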